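(* Let $L_1, M_1, L_2, M_2$ be Lagrangian subspaces of $(\mathbf R^{2n},\omega)$ such that $L_1, M_1, L_2$ are pairwise transverse and $M_2$ is transverse to $L_1$. If the Maslov form $[L_1,M_1,L_2]$ is positive definite, then the cross ratio $[L_1,M_1,L_2,M_2]$ is a diagonalizable endomorphism of $L_1$. If moreover $M_2$ is transverse to $L_2$ and the Maslov form $[L_2,M_2,L_1]$ is also positive definite, then $[L_1,M_1,L_2,M_2]$ has positive eigenvalues.
   Context: $\omega$ is the standard symplectic form on $\mathbf R^{2n}$, $\omega(x,y)={}^T x\begin{pmatrix}0&\mathrm{Id}\\-\mathrm{Id}&0\end{pmatrix}y$. A Lagrangian is an $n$-dimensional subspace on which $\omega$ vanishes; two Lagrangians are transverse if they intersect trivially. If $M$ is a Lagrangian transverse to a Lagrangian $L_2$ and $L_1$ is a Lagrangian transverse to $L_2$, there is a unique linear map $M_{L_1\to L_2}\colon L_1\to L_2$ with $M=\{e+M_{L_1\to L_2}(e): e\in L_1\}$. For pairwise transverse Lagrangians $L_1,M,L_2$ the Maslov form $[L_1,M,L_2]$ is the (symmetric, nondegenerate) bilinear form on $L_1$ given by $(v,w)\mapsto \omega(v, M_{L_1\to L_2}(w))$. The cross ratio is the endomorphism $[L_1,M_1,L_2,M_2]\mathrel{:=} -\,(M_2)_{L_2\to L_1}\circ (M_1)_{L_1\to L_2}$ of $L_1$. *)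

theory Defs
  imports "HOL-Analysis.Analysis"
begin

text \<open>R^{2n} is modelled as pairs (a,b) of vectors in R^n, i.e. x = (a,b) with a the
  first n coordinates and b the last n coordinates.\<close>

type_synonym 'n sympl = "(real ^ 'n) \<times> (real ^ 'n)"

text \<open>Standard symplectic form: omega(x,y) = x^T J y with J = [[0,Id],[-Id,0]],
  i.e. omega((a,b),(c,d)) = a.d - b.c.\<close>
definition omega :: "'n::finite sympl \<Rightarrow> 'n sympl \<Rightarrow> real" where
  "omega x y = fst x \<bullet> snd y - snd x \<bullet> fst y"

definition lagrangian :: "('n::finite) sympl set \<Rightarrow> bool" where
  "lagrangian L \<longleftrightarrow> subspace L \<and> dim L = CARD('n) \<and> (\<forall>x\<in>L. \<forall>y\<in>L. omega x y = 0)"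

definition transverse :: "('n::finite) sympl set \<Rightarrow> 'n sympl set \<Rightarrow> bool" where
  "transverse L M \<longleftrightarrow> L \<inter> M = {0}"

text \<open>The map M_{L1 -> L2} : L1 -> L2 whose graph {e + M_{L1->L2}(e) : e in L1} is M
  (for e in L1 it is the unique y in L2 with e + y in M; set to 0 outside L1).\<close>
definition graph_map :: "('n::finite) sympl set \<Rightarrow> 'n sympl set \<Rightarrow> 'n sympl set \<Rightarrow> ('n sympl \<Rightarrow> 'n sympl)" where
  "graph_map M L1 L2 = (\<lambda>e. if e \<in> L1 then (THE y. y \<in> L2 \<and> e + y \<in> M) else 0)"

definition maslov_form :: "('n::finite) sympl set \<Rightarrow> 'n sympl set \<Rightarrow> 'n sympl set \<Rightarrow> 'n sympl \<Rightarrow> 'n sympl \<Rightarrow> real" where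
  "maslov_form L1 M L2 v w = omega v (graph_map M L1 L2 w)"

definition pos_def_on :: "('n::finite) sympl set \<Rightarrow> ('n sympl \<Rightarrow> 'n sympl \<Rightarrow> real) \<Rightarrow> bool" where
  "pos_def_on L B \<longleftrightarrow> (\<forall>v\<in>L. v \<noteq> 0 \<longrightarrow> B v v > 0)"

definition cross_ratio :: "('n::finite) sympl set \<Rightarrow> 'n sympl set \<Rightarrow> 'n sympl set \<Rightarrow> 'n sympl set \<Rightarrow> 'n sympl \<Rightarrow> 'n sympl" where
  "cross_ratio L1 M1 L2 M2 = (\<lambda>v. - graph_map M2 L2 L1 (graph_map M1 L1 L2 v))"

definition diagonalizable_on :: "('n::finite) sympl set \<Rightarrow> ('n sympl \<Rightarrow> 'n sympl) \<Rightarrow> bool" where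
  "diagonalizable_on L T \<longleftrightarrow>
     (\<exists>B. independent B \<and> span B = L \<and> (\<forall>b\<in>B. \<exists>c::real. T b = c *\<^sub>R b))"

definition eigenvalue_on :: "('n::finite) sympl set \<Rightarrow> ('n sympl \<Rightarrow> 'n sympl) \<Rightarrow> real \<Rightarrow> bool" where
  "eigenvalue_on L T c \<longleftrightarrow> (\<exists>v\<in>L. v \<noteq> 0 \<and> T v = c *\<^sub>R v)"

end

theory Submission
  imports Defs
begin

text \<open>Write a = (M1)_{L1->L2} and b = (M2)_{L2->L1}, so that the cross ratio is T = - b a and the
  Maslov form is g(v, w) = omega(v, a w). Since L1, L2 and the graph M1 of a are Lagrangian,
  omega(v, a w) = omega(w, a v) on L1, and likewise for b on L2; combining the two gives
  g(x, T y) = g(T x, y). An operator that is self-adjoint for a positive definite form is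
  diagonalizable: a maximiser of the Rayleigh quotient g(T v, v) / g(v, v) is an eigenvector, its
  g-orthogonal complement is invariant, and one inducts on the dimension. Finally
  g(v, T v) = [L2,M2,L1](a v, a v) with a v \<noteq> 0 because M1 is transverse to L1, so when that form
  is positive definite as well, every eigenvalue c satisfies c g(v, v) > 0.\<close>

section \<open>Operators self-adjoint for a positive definite form\<close>

lemma nonpos_if_quadratic_nonpos:
  fixes a q :: real
  assumes "\<And>t. 2 * t * a + t\<^sup>2 * q \<le> 0"
  shows "a \<le> 0"
proof (rule ccontr)
  assume "\<not> a \<le> 0"
  define t where "t = a / (\<bar>q\<bar> + 1)"
  have "t > 0" "t * \<bar>q\<bar> < a"
    using \<open>\<not> a \<le> 0\<close> by (auto simp: t_def field_simps)
  moreover have "- (t * \<bar>q\<bar>) \<le> t * q"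
    using mult_left_mono[of "- \<bar>q\<bar>" q t] \<open>t > 0\<close> by simp
  ultimately have "2 * a + t * q > 0"
    using \<open>\<not> a \<le> 0\<close> by linarith
  then have "t * (2 * a + t * q) > 0"
    using \<open>t > 0\<close> by simp
  also have "t * (2 * a + t * q) = 2 * t * a + t\<^sup>2 * q"
    by (simp add: power2_eq_square algebra_simps)
  finally show False
    using assms[of t] by simp
qed

lemma selfadjoint_nonpos_form_kernel:
  fixes R :: "'a::real_vector \<Rightarrow> 'a" and g :: "'a \<Rightarrow> 'a \<Rightarrow> real"
  assumes "linear R" "bilinear g" "subspace S" "R ` S \<subseteq> S"
    and selfadjoint: "\<And>x y. x \<in> S \<Longrightarrow> y \<in> S \<Longrightarrow> g x (R y) = g (R x) y"
    and pos: "\<And>x. x \<in> S \<Longrightarrow> x \<noteq> 0 \<Longrightarrow> g x x > 0"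
    and nonpos: "\<And>u. u \<in> S \<Longrightarrow> g (R u) u \<le> 0"
    and "v \<in> S" "g (R v) v = 0"
  shows "R v = 0"
proof -
  define w where "w = R v"
  have "w \<in> S"
    using assms(4,8) by (auto simp: w_def)
  have "g (R (v + t *\<^sub>R w)) (v + t *\<^sub>R w) = 2 * t * g w w + t\<^sup>2 * g (R w) w" for t
  proof -
    have "g (R w) v = g w w"
      using selfadjoint[OF \<open>w \<in> S\<close> \<open>v \<in> S\<close>] by (simp add: w_def)
    then show ?thesis
      using assms(9) \<open>linear R\<close> \<open>bilinear g\<close>
      by (simp add: linear_add linear_scale bilinear_ladd bilinear_radd bilinear_lmul
          bilinear_rmul power2_eq_square algebra_simps flip: w_def)
  qed
  moreover have "v + t *\<^sub>R w \<in> S" for t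
    using assms(3,8) \<open>w \<in> S\<close> by (simp add: subspace_add subspace_scale)
  ultimately have "2 * t * g w w + t\<^sup>2 * g (R w) w \<le> 0" for t
    using nonpos by metis
  then have "g w w \<le> 0"
    by (rule nonpos_if_quadratic_nonpos)
  then show ?thesis
    using pos \<open>w \<in> S\<close> by (force simp: w_def)
qed

lemma continuous_on_rayleigh_quotient:
  fixes T :: "'a::euclidean_space \<Rightarrow> 'a" and g :: "'a \<Rightarrow> 'a \<Rightarrow> real"
  assumes "linear T" "bilinear g" "\<forall>x\<in>K. g x x \<noteq> 0"
  shows "continuous_on K (\<lambda>x. g (T x) x / g x x)"
proof -
  have "continuous_on K T"
    using \<open>linear T\<close> by (simp add: linear_continuous_on linear_conv_bounded_linear)
  then have "continuous_on K (\<lambda>x. g (T x) x)"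
    using bilinear_continuous_on_compose[OF _ continuous_on_id \<open>bilinear g\<close>] by blast
  moreover have "continuous_on K (\<lambda>x. g x x)"
    using bilinear_continuous_on_compose[OF continuous_on_id continuous_on_id \<open>bilinear g\<close>] .
  ultimately show ?thesis
    using assms(3) by (rule continuous_on_divide)
qed

lemma rayleigh_quotient_attains_max:
  fixes T :: "'a::euclidean_space \<Rightarrow> 'a" and g :: "'a \<Rightarrow> 'a \<Rightarrow> real"
  assumes "linear T" "bilinear g" "subspace S" "S \<noteq> {0}"
    and pos: "\<And>x. x \<in> S \<Longrightarrow> x \<noteq> 0 \<Longrightarrow> g x x > 0"
  obtains v where "v \<in> S" "v \<noteq> 0"
    "\<And>u. u \<in> S \<Longrightarrow> g (T u) u \<le> g (T v) v / g v v * g u u"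
proof -
  define K where "K = S \<inter> sphere 0 1"
  define f where "f x = g (T x) x / g x x" for x
  have normalize_in_K: "x /\<^sub>R norm x \<in> K" if "x \<in> S" "x \<noteq> 0" for x
    using that assms(3) by (simp add: K_def subspace_scale)
  have f_normalize: "f (x /\<^sub>R norm x) = f x" if "x \<noteq> 0" for x
    using that \<open>linear T\<close> \<open>bilinear g\<close>
    by (simp add: f_def linear_scale bilinear_lmul bilinear_rmul)
  have "compact K"
    unfolding K_def by (intro closed_Int_compact closed_subspace compact_sphere assms)
  obtain x where "x \<in> S" "x \<noteq> 0"
    using assms(3,4) subspace_0 by blast
  then have "K \<noteq> {}"
    using normalize_in_K by blast
  have "\<forall>x\<in>K. g x x \<noteq> 0"
    using pos by (force simp: K_def)
  then have "continuous_on K f"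
    unfolding f_def using continuous_on_rayleigh_quotient[OF \<open>linear T\<close> \<open>bilinear g\<close>] by blast
  then obtain v where "v \<in> K" and v_max: "\<And>y. y \<in> K \<Longrightarrow> f y \<le> f v"
    using continuous_attains_sup[OF \<open>compact K\<close> \<open>K \<noteq> {}\<close>] by blast
  show thesis
  proof (rule that)
    show "v \<in> S" "v \<noteq> 0"
      using \<open>v \<in> K\<close> by (auto simp: K_def)
    fix u assume "u \<in> S"
    show "g (T u) u \<le> g (T v) v / g v v * g u u"
    proof (cases "u = 0")
      case True
      then show ?thesis
        using \<open>linear T\<close> \<open>bilinear g\<close> by (simp add: linear_0 bilinear_rzero)
    next
      case False
      then have "f u \<le> f v"
        using v_max[OF normalize_in_K[OF \<open>u \<in> S\<close>]] f_normalize by simp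
      then show ?thesis
        using pos[OF \<open>u \<in> S\<close> False] by (simp add: f_def pos_divide_le_eq)
    qed
  qed
qed

lemma selfadjoint_has_eigenvector:
  fixes T :: "'a::euclidean_space \<Rightarrow> 'a" and g :: "'a \<Rightarrow> 'a \<Rightarrow> real"
  assumes "linear T" "bilinear g" "subspace S" "S \<noteq> {0}" "T ` S \<subseteq> S"
    and selfadjoint: "\<And>x y. x \<in> S \<Longrightarrow> y \<in> S \<Longrightarrow> g x (T y) = g (T x) y"
    and pos: "\<And>x. x \<in> S \<Longrightarrow> x \<noteq> 0 \<Longrightarrow> g x x > 0"
  obtains v c where "v \<in> S" "v \<noteq> 0" "T v = c *\<^sub>R v"
proof -
  obtain v where "v \<in> S" "v \<noteq> 0"
    and v_max: "\<And>u. u \<in> S \<Longrightarrow> g (T u) u \<le> g (T v) v / g v v * g u u"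
    using rayleigh_quotient_attains_max[OF assms(1-4) pos] by blast
  define c where "c = g (T v) v / g v v"
  define R where "R x = T x - c *\<^sub>R x" for x
  have "R v = 0"
  proof (rule selfadjoint_nonpos_form_kernel[where R = R and v = v])
    show "linear R"
      unfolding R_def by (intro linear_compose_sub \<open>linear T\<close> linear_scale_self)
    show "R ` S \<subseteq> S"
      using assms(3,5) by (auto simp: R_def subspace_diff subspace_scale)
    show "g x (R y) = g (R x) y" if "x \<in> S" "y \<in> S" for x y
      using selfadjoint[OF that] \<open>bilinear g\<close>
      by (simp add: R_def bilinear_lsub bilinear_rsub bilinear_lmul bilinear_rmul)
    show "g (R u) u \<le> 0" if "u \<in> S" for u
      using v_max[OF that] \<open>bilinear g\<close> by (simp add: R_def c_def bilinear_lsub bilinear_lmul)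
    show "g (R v) v = 0"
      using pos[OF \<open>v \<in> S\<close> \<open>v \<noteq> 0\<close>] \<open>bilinear g\<close>
      by (simp add: R_def c_def bilinear_lsub bilinear_lmul)
  qed (use assms \<open>v \<in> S\<close> in auto)
  then show thesis
    using that[OF \<open>v \<in> S\<close> \<open>v \<noteq> 0\<close>, of c] by (simp add: R_def)
qed

lemma subspace_form_kernel:
  fixes g :: "'a::real_vector \<Rightarrow> 'a \<Rightarrow> real"
  assumes "bilinear g" "subspace S"
  shows "subspace {w \<in> S. g v w = 0}"
  using assms by (auto simp: subspace_def bilinear_rzero bilinear_radd bilinear_rmul)

lemma selfadjoint_form_kernel_invariant:
  fixes T :: "'a::real_vector \<Rightarrow> 'a" and g :: "'a \<Rightarrow> 'a \<Rightarrow> real"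
  assumes "bilinear g" "T ` S \<subseteq> S"
    and selfadjoint: "\<And>x y. x \<in> S \<Longrightarrow> y \<in> S \<Longrightarrow> g x (T y) = g (T x) y"
    and "v \<in> S" "T v = c *\<^sub>R v"
  shows "T ` {w \<in> S. g v w = 0} \<subseteq> {w \<in> S. g v w = 0}"
proof (intro image_subsetI)
  fix w assume "w \<in> {w \<in> S. g v w = 0}"
  moreover have "g v (T w) = c * g v w" if "w \<in> S"
    using selfadjoint[OF \<open>v \<in> S\<close> that] \<open>T v = c *\<^sub>R v\<close> \<open>bilinear g\<close> by (simp add: bilinear_lmul)
  ultimately show "T w \<in> {w \<in> S. g v w = 0}"
    using \<open>T ` S \<subseteq> S\<close> by auto
qed

lemma span_insert_form_kernel:
  fixes g :: "'a::real_vector \<Rightarrow> 'a \<Rightarrow> real"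
  assumes "bilinear g" "subspace S" "v \<in> S" "g v v \<noteq> 0"
  shows "span (insert v {w \<in> S. g v w = 0}) = S"
proof -
  let ?K = "{w \<in> S. g v w = 0}"
  have "subspace ?K"
    using subspace_form_kernel[OF assms(1,2)] .
  then have "span (insert v ?K) = {x. \<exists>k. x - k *\<^sub>R v \<in> ?K}"
    by (simp only: span_insert span_eq_iff[THEN iffD2])
  also have "\<dots> = S"
  proof (intro equalityI subsetI)
    fix x assume "x \<in> {x. \<exists>k. x - k *\<^sub>R v \<in> ?K}"
    then obtain k where "x - k *\<^sub>R v \<in> S" by blast
    then have "x - k *\<^sub>R v + k *\<^sub>R v \<in> S"
      by (rule subspace_add[OF assms(2) _ subspace_scale[OF assms(2,3)]])
    then show "x \<in> S" by simp
  next
    fix x assume "x \<in> S"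
    then have "x - (g v x / g v v) *\<^sub>R v \<in> ?K"
      using assms by (simp add: subspace_diff subspace_scale bilinear_rsub bilinear_rmul)
    then show "x \<in> {x. \<exists>k. x - k *\<^sub>R v \<in> ?K}" by blast
  qed
  finally show ?thesis .
qed

lemma selfadjoint_eigenbasis:
  fixes T :: "'a::euclidean_space \<Rightarrow> 'a" and g :: "'a \<Rightarrow> 'a \<Rightarrow> real"
  assumes "linear T" "bilinear g"
  shows "subspace S \<Longrightarrow> T ` S \<subseteq> S \<Longrightarrow>
    (\<And>x y. x \<in> S \<Longrightarrow> y \<in> S \<Longrightarrow> g x (T y) = g (T x) y) \<Longrightarrow>
    (\<And>x. x \<in> S \<Longrightarrow> x \<noteq> 0 \<Longrightarrow> g x x > 0) \<Longrightarrow>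
    \<exists>B. independent B \<and> span B = S \<and> (\<forall>b\<in>B. \<exists>c. T b = c *\<^sub>R b)"
proof (induction "dim S" arbitrary: S rule: less_induct)
  case less
  show ?case
  proof (cases "S = {0}")
    case True
    then show ?thesis by (intro exI[of _ "{}"]) (auto simp: independent_empty)
  next
    case False
    obtain v c where "v \<in> S" "v \<noteq> 0" "T v = c *\<^sub>R v"
      by (rule selfadjoint_has_eigenvector[of T g S, OF assms less.prems(1) False less.prems(2-4)])
    define S' where "S' = {w \<in> S. g v w = 0}"
    have "S' \<subseteq> S" "subspace S'"
      using subspace_form_kernel[OF assms(2) less.prems(1)] by (auto simp: S'_def)
    have "T ` S' \<subseteq> S'"
      unfolding S'_def
      using selfadjoint_form_kernel_invariant[OF assms(2) less.prems(2,3) \<open>v \<in> S\<close> \<open>T v = c *\<^sub>R v\<close>] .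
    have "g v v > 0"
      using less.prems(4) \<open>v \<in> S\<close> \<open>v \<noteq> 0\<close> by blast
    then have "v \<notin> S'"
      by (simp add: S'_def)
    then have "dim S' < dim S"
      using \<open>S' \<subseteq> S\<close> \<open>subspace S'\<close> \<open>v \<in> S\<close> less.prems(1) by (metis dim_psubset psubsetI span_eq_iff)
    then obtain B where B: "independent B" "span B = S'" "\<forall>b\<in>B. \<exists>c. T b = c *\<^sub>R b"
      using less.hyps[OF _ \<open>subspace S'\<close> \<open>T ` S' \<subseteq> S'\<close>] less.prems(3,4) \<open>S' \<subseteq> S\<close> by blast
    have "span (insert v B) = span (insert v S')"
      unfolding span_insert B(2)[symmetric] span_span ..
    also have "\<dots> = S"
      unfolding S'_def using span_insert_form_kernel[OF assms(2) less.prems(1) \<open>v \<in> S\<close>] \<open>g v v > 0\<close> by simp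
    finally have "span (insert v B) = S" .
    moreover have "independent (insert v B)"
      using \<open>v \<notin> S'\<close> B by (simp add: independent_insertI)
    ultimately show ?thesis
      using B(3) \<open>T v = c *\<^sub>R v\<close> by (intro exI[of _ "insert v B"]) auto
  qed
qed

section \<open>Graphs of Lagrangians over transverse Lagrangians\<close>

lemma bilinear_omega: "bilinear omega"
  by (auto simp: bilinear_def omega_def inner_add_left inner_add_right algebra_simps intro!: linearI)

lemma bilinear_compose_right: "bilinear h \<Longrightarrow> linear f \<Longrightarrow> bilinear (\<lambda>x y. h x (f y))"
  unfolding bilinear_def by (auto intro: linear_compose[of f, unfolded o_def])

lemma omega_skew: "omega x y = - omega y x"
  by (simp add: omega_def inner_commute)

lemma lagrangian_omega_eq_0: "lagrangian L \<Longrightarrow> x \<in> L \<Longrightarrow> y \<in> L \<Longrightarrow> omega x y = 0"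
  by (simp add: lagrangian_def)

text \<open>graph_fun M L is the map (M)_{L'->L} for every complement L' of L, defined on the whole
  space; unlike graph_map, which is 0 off its domain, it is linear.\<close>

definition graph_fun :: "'a::real_vector set \<Rightarrow> 'a set \<Rightarrow> 'a \<Rightarrow> 'a" where
  "graph_fun M L e = (THE y. y \<in> L \<and> e + y \<in> M)"

lemma graph_map_eq_graph_fun: "e \<in> L1 \<Longrightarrow> graph_map M L1 L2 e = graph_fun M L2 e"
  by (simp add: graph_map_def graph_fun_def)

context
  fixes M L :: "'a::euclidean_space set"
  assumes M: "subspace M" and L: "subspace L" and M_inter_L: "M \<inter> L = {0}"
    and dim_M_L: "dim M + dim L = DIM('a)"
begin

lemma complementary_subspaces_unique_decomposition: "\<exists>!y. y \<in> L \<and> e + y \<in> M"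
proof -
  have "dim {x + y |x y. x \<in> M \<and> y \<in> L} = DIM('a)"
    using dim_sums_Int[OF M L] M_inter_L dim_M_L by simp
  then have "span {x + y |x y. x \<in> M \<and> y \<in> L} = UNIV"
    by (rule dim_eq_full[THEN iffD1])
  then have "{x + y |x y. x \<in> M \<and> y \<in> L} = UNIV"
    by (simp only: span_eq_iff[THEN iffD2, OF subspace_sums[OF M L]])
  then obtain m y where "e = m + y" "m \<in> M" "y \<in> L"
    by blast
  then have "- y \<in> L \<and> e + - y \<in> M"
    using L by (simp add: subspace_neg)
  moreover have "y1 = y2" if "y1 \<in> L" "e + y1 \<in> M" "y2 \<in> L" "e + y2 \<in> M" for y1 y2
  proof -
    have "y1 - y2 \<in> L"
      using that L by (simp add: subspace_diff)
    moreover have "(e + y1) - (e + y2) \<in> M"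
      by (rule subspace_diff[OF M that(2,4)])
    ultimately have "y1 - y2 \<in> M \<inter> L"
      by simp
    then show ?thesis
      using M_inter_L by simp
  qed
  ultimately show ?thesis
    by blast
qed

lemma graph_fun_mem: "graph_fun M L e \<in> L" "e + graph_fun M L e \<in> M"
  using theI'[OF complementary_subspaces_unique_decomposition] by (simp_all add: graph_fun_def)

lemma graph_fun_eqI: "y \<in> L \<Longrightarrow> e + y \<in> M \<Longrightarrow> graph_fun M L e = y"
  unfolding graph_fun_def
  using complementary_subspaces_unique_decomposition by (rule the1_equality) simp

lemma linear_graph_fun: "linear (graph_fun M L)"
proof (rule linearI)
  fix x y :: 'a and c :: real
  have "(x + graph_fun M L x) + (y + graph_fun M L y) \<in> M"
    using M graph_fun_mem by (simp add: subspace_add)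
  then show "graph_fun M L (x + y) = graph_fun M L x + graph_fun M L y"
    using L graph_fun_mem by (intro graph_fun_eqI) (simp_all add: subspace_add algebra_simps)
  have "c *\<^sub>R (x + graph_fun M L x) \<in> M"
    using M graph_fun_mem by (simp add: subspace_scale)
  then show "graph_fun M L (c *\<^sub>R x) = c *\<^sub>R graph_fun M L x"
    using L graph_fun_mem by (intro graph_fun_eqI) (simp_all add: subspace_scale scaleR_right_distrib)
qed

end

lemma graph_fun_lagrangian:
  fixes M L :: "('n::finite) sympl set"
  assumes "lagrangian M" "lagrangian L" "transverse M L"
  shows "graph_fun M L e \<in> L" "e + graph_fun M L e \<in> M" "linear (graph_fun M L)"
proof -
  have "subspace M" "subspace L" "M \<inter> L = {0}" "dim M + dim L = DIM('n sympl)"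
    using assms by (simp_all add: lagrangian_def transverse_def)
  then show "graph_fun M L e \<in> L" "e + graph_fun M L e \<in> M" "linear (graph_fun M L)"
    by (simp_all add: graph_fun_mem linear_graph_fun)
qed

lemma omega_graph_fun_commute:
  fixes L1 L2 M :: "('n::finite) sympl set"
  assumes "lagrangian L1" "lagrangian L2" "lagrangian M" "transverse M L2" "v \<in> L1" "w \<in> L1"
  shows "omega v (graph_fun M L2 w) = omega w (graph_fun M L2 v)"
proof -
  let ?a = "graph_fun M L2"
  have "omega (v + ?a v) (w + ?a w) = 0" "omega v w = 0" "omega (?a v) (?a w) = 0"
    using assms graph_fun_lagrangian[OF assms(3,2,4)] by (simp_all add: lagrangian_omega_eq_0)
  then show ?thesis
    using omega_skew[of "?a v" w] by (simp add: bilinear_ladd[OF bilinear_omega] bilinear_radd[OF bilinear_omega])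
qed

lemma omega_graph_fun_graph_fun:
  fixes L1 L2 M1 M2 :: "('n::finite) sympl set"
  assumes "lagrangian L1" "lagrangian L2" "lagrangian M1" "lagrangian M2"
    and "transverse M1 L2" "transverse M2 L1" "x \<in> L1"
  shows "omega x (graph_fun M1 L2 (graph_fun M2 L1 u)) = - omega (graph_fun M1 L2 x) (graph_fun M2 L1 u)"
  using omega_graph_fun_commute[OF assms(1-3,5,7) graph_fun_lagrangian(1)[OF assms(4,1,6)]]
    omega_skew[of "graph_fun M2 L1 u" "graph_fun M1 L2 x"] by simp

lemma graph_fun_comp_selfadjoint:
  fixes L1 L2 M1 M2 :: "('n::finite) sympl set"
  assumes "lagrangian L1" "lagrangian L2" "lagrangian M1" "lagrangian M2"
    and "transverse M1 L2" "transverse M2 L1" "x \<in> L1" "y \<in> L1"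
  defines "a \<equiv> graph_fun M1 L2" and "b \<equiv> graph_fun M2 L1"
  shows "omega x (a (b (a y))) = omega (b (a x)) (a y)"
proof -
  have "a x \<in> L2" "a y \<in> L2" "b (a x) \<in> L1"
    using graph_fun_lagrangian assms by (simp_all add: a_def b_def)
  have "omega x (a (b (a y))) = - omega (a x) (b (a y))"
    using omega_graph_fun_graph_fun[OF assms(1-7)] by (simp add: a_def b_def)
  also have "\<dots> = - omega (a y) (b (a x))"
    using omega_graph_fun_commute[OF assms(2,1,4,6) \<open>a x \<in> L2\<close> \<open>a y \<in> L2\<close>] by (simp add: b_def)
  also have "\<dots> = omega y (a (b (a x)))"
    using omega_graph_fun_graph_fun[OF assms(1-6,8)] by (simp add: a_def b_def)
  also have "\<dots> = omega (b (a x)) (a y)"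
    using omega_graph_fun_commute[OF assms(1-3,5,8) \<open>b (a x) \<in> L1\<close>] by (simp add: a_def)
  finally show ?thesis .
qed

lemma cross_ratio_eq_graph_fun:
  fixes L1 L2 M1 M2 :: "('n::finite) sympl set"
  assumes "lagrangian M1" "lagrangian L2" "transverse M1 L2" "v \<in> L1"
  shows "cross_ratio L1 M1 L2 M2 v = - graph_fun M2 L1 (graph_fun M1 L2 v)"
  using assms(4) graph_fun_lagrangian(1)[OF assms(1-3)]
  by (simp add: cross_ratio_def graph_map_eq_graph_fun)

lemma cross_ratio_diagonalizable:
  fixes L1 L2 M1 M2 :: "('n::finite) sympl set"
  assumes "lagrangian L1" "lagrangian L2" "lagrangian M1" "lagrangian M2"
    and "transverse M1 L2" "transverse M2 L1"
    and "pos_def_on L1 (maslov_form L1 M1 L2)"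
  shows "diagonalizable_on L1 (cross_ratio L1 M1 L2 M2)"
proof -
  define a where "a = graph_fun M1 L2"
  define b where "b = graph_fun M2 L1"
  define g where "g x y = omega x (a y)" for x y
  define T where "T v = - b (a v)" for v
  have a: "a e \<in> L2" "linear a" and b: "b e \<in> L1" "linear b" for e
    using graph_fun_lagrangian assms by (simp_all add: a_def b_def)
  have "linear T"
    unfolding T_def using linear_compose_neg[OF linear_compose[OF a(2) b(2)]] by (simp add: o_def)
  have "bilinear g"
    unfolding g_def by (rule bilinear_compose_right[OF bilinear_omega a(2)])
  have "subspace L1"
    using assms(1) by (simp add: lagrangian_def)
  then have "T ` L1 \<subseteq> L1"
    unfolding T_def using subspace_neg b(1) by blast
  have selfadjoint: "g x (T y) = g (T x) y" if "x \<in> L1" "y \<in> L1" for x y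
    using graph_fun_comp_selfadjoint[OF assms(1-6) that, folded a_def b_def] a(2)
    by (simp add: g_def T_def linear_neg bilinear_lneg[OF bilinear_omega] bilinear_rneg[OF bilinear_omega])
  have pos: "g v v > 0" if "v \<in> L1" "v \<noteq> 0" for v
    using assms(7) that by (simp add: pos_def_on_def maslov_form_def graph_map_eq_graph_fun g_def a_def)
  obtain B where B: "independent B" "span B = L1" "\<forall>v\<in>B. \<exists>c. T v = c *\<^sub>R v"
    using selfadjoint_eigenbasis[OF \<open>linear T\<close> \<open>bilinear g\<close> \<open>subspace L1\<close> \<open>T ` L1 \<subseteq> L1\<close>
        selfadjoint pos] by blast
  moreover have "cross_ratio L1 M1 L2 M2 v = T v" if "v \<in> B" for v
    using cross_ratio_eq_graph_fun[OF assms(3,2,5)] span_base[OF that] B(2)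
    by (simp add: T_def a_def b_def)
  ultimately show ?thesis
    unfolding diagonalizable_on_def by (intro exI[of _ B]) auto
qed

lemma cross_ratio_eigenvalue_pos:
  fixes L1 L2 M1 M2 :: "('n::finite) sympl set"
  assumes "lagrangian L1" "lagrangian L2" "lagrangian M1" "lagrangian M2"
    and "transverse L1 M1" "transverse M1 L2" "transverse M2 L1"
    and "pos_def_on L1 (maslov_form L1 M1 L2)" "pos_def_on L2 (maslov_form L2 M2 L1)"
    and "eigenvalue_on L1 (cross_ratio L1 M1 L2 M2) c"
  shows "c > 0"
proof -
  define a where "a = graph_fun M1 L2"
  define b where "b = graph_fun M2 L1"
  have a: "a e \<in> L2" "e + a e \<in> M1" "linear a" for e
    using graph_fun_lagrangian[OF assms(3,2,6)] by (simp_all add: a_def)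
  obtain v where v: "v \<in> L1" "v \<noteq> 0" "- b (a v) = c *\<^sub>R v"
    using assms(10) cross_ratio_eq_graph_fun[OF assms(3,2,6)]
    by (auto simp: eigenvalue_on_def a_def b_def)
  have "a v \<noteq> 0"
  proof
    assume "a v = 0"
    then have "v \<in> L1 \<inter> M1"
      using a(2)[of v] v(1) by simp
    then show False
      using v(2) assms(5) unfolding transverse_def by blast
  qed
  then have "0 < omega (a v) (b (a v))"
    using assms(9) a(1)[of v]
    by (simp add: pos_def_on_def maslov_form_def graph_map_eq_graph_fun b_def)
  also have "\<dots> = omega v (a (- b (a v)))"
    using omega_graph_fun_graph_fun[OF assms(1-4,6,7) v(1), folded a_def b_def] a(3)
    by (simp add: linear_neg bilinear_rneg[OF bilinear_omega])
  also have "\<dots> = c * omega v (a v)"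
    using v(3) a(3) by (simp add: linear_scale bilinear_rmul[OF bilinear_omega])
  finally have "0 < c * omega v (a v)" .
  moreover have "omega v (a v) > 0"
    using assms(8) v(1,2) by (simp add: pos_def_on_def maslov_form_def graph_map_eq_graph_fun a_def)
  ultimately show ?thesis
    by (simp add: zero_less_mult_iff)
qed

theorem corollary3p4:
  fixes L1 M1 L2 M2 :: "('n::finite) sympl set"
  assumes "lagrangian L1" "lagrangian M1" "lagrangian L2" "lagrangian M2"
    and "transverse L1 M1" "transverse M1 L2" "transverse L1 L2"
    and "transverse M2 L1"
    and "pos_def_on L1 (maslov_form L1 M1 L2)"
  shows "diagonalizable_on L1 (cross_ratio L1 M1 L2 M2) \<and>
         (transverse M2 L2 \<and> pos_def_on L2 (maslov_form L2 M2 L1) \<longrightarrow>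
            (\<forall>c. eigenvalue_on L1 (cross_ratio L1 M1 L2 M2) c \<longrightarrow> c > 0))"
  using cross_ratio_diagonalizable[OF assms(1,3,2,4,6,8,9)]
    cross_ratio_eigenvalue_pos[OF assms(1,3,2,4,5,6,8,9)]
  by blast

end
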